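(* If $Q\in\mathcal{A}^{(0)}$, then $Q=c\,\mathcal{D}+\mathcal{L}$ for some $c\in\mathbb{R}$, where $\mathcal{D}=w\,\partial/\partial w+\sum_{j=1}^n\delta_jz_j\,\partial/\partial z_j$ and $\mathcal{L}=\sum_{j=1}^n \ell_j(z_1,\dots,z_n)\partial/\partial z_j$ is a vector field independent of $w$ with no $\partial/\partial w$ component.
   Context: Coordinates $(w,z)=(z_0,z_1,\dots,z_n)\in\mathbb{C}\times\mathbb{C}^n$, $w=u+iv$. Weights: $\delta_0=1$ for $w$, $\delta_j=1/(2m_j)$ ($m_j$ positive integers) for $z_j$; $\mathrm{wt}(z^J)=\sum_k j_k\delta_k$, $\mathrm{wt}(z^J\bar z^K)=\mathrm{wt}\,J+\mathrm{wt}\,K$. A holomorphic polynomial vector field $Q=\sum_{k=0}^n q_k\partial/\partial z_k$ is homogeneous of weight $\mu$ if each $q_k$ is zero or homogeneous of weight $\mu-\delta_k$. Standing assumptions: $p(z,\bar z)=\sum c_{A,B}z^A\bar z^B$ is a real polynomial on $\mathbb{C}^n$, homogeneous of weight 1, with no purely holomorphic or purely antiholomorphic monomials. $\Omega_{hom}=\{v+p(z,\bar z)<0\}$, and $\mathcal{A}^{(\mu)}$ is the set of holomorphic vector fields $Q=q_0\partial/\partial w+\sum_{j=1}^nq_j\partial/\partial z_j$ homogeneous of weight $\mu$ with $\mathrm{Re}\big(-\tfrac{i}{2}q_0+\sum_j q_j\partial p/\partial z_j\big)=0$ on $\partial\Omega_{hom}$. *)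

theory Defs
  imports "HOL-Analysis.Analysis"
begin

text \<open>Coordinates: w :: complex, z :: complex^'n (index type 'n of size n).
  Multi-indices are functions 'n \<Rightarrow> nat.  Weights: w has weight 1,
  z_j has weight delta m j = 1/(2 m_j).\<close>

definition delta :: "('n::finite \<Rightarrow> nat) \<Rightarrow> 'n \<Rightarrow> real" where
  "delta m j = 1 / (2 * real (m j))"

definition wt :: "('n::finite \<Rightarrow> nat) \<Rightarrow> ('n \<Rightarrow> nat) \<Rightarrow> real" where
  "wt m J = (\<Sum>i\<in>UNIV. real (J i) * delta m i)"

definition monom :: "('n::finite \<Rightarrow> nat) \<Rightarrow> complex^'n \<Rightarrow> complex" where
  "monom J z = (\<Prod>i\<in>UNIV. (z $ i) ^ (J i))"

definition is_hpoly :: "(nat \<Rightarrow> ('n::finite \<Rightarrow> nat) \<Rightarrow> complex) \<Rightarrow> bool" where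
  "is_hpoly a \<longleftrightarrow> finite {(k, J). a k J \<noteq> 0}"

definition hpoly_eval :: "(nat \<Rightarrow> ('n::finite \<Rightarrow> nat) \<Rightarrow> complex) \<Rightarrow> complex \<Rightarrow> complex^'n \<Rightarrow> complex" where
  "hpoly_eval a w z = (\<Sum>(k, J)\<in>{(k, J). a k J \<noteq> 0}. a k J * w ^ k * monom J z)"

definition hom_hpoly :: "('n::finite \<Rightarrow> nat) \<Rightarrow> real \<Rightarrow> (nat \<Rightarrow> ('n \<Rightarrow> nat) \<Rightarrow> complex) \<Rightarrow> bool" where
  "hom_hpoly m mu a \<longleftrightarrow> (\<forall>k J. a k J \<noteq> 0 \<longrightarrow> real k + wt m J = mu)"

text \<open>Holomorphic polynomial vector field Q = q0 d/dw + sum_j q j d/dz_j, homogeneous of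
  weight mu: q0 of weight mu + 1, q j of weight mu + delta_j.\<close>
definition hom_vf :: "('n::finite \<Rightarrow> nat) \<Rightarrow> real \<Rightarrow> (nat \<Rightarrow> ('n \<Rightarrow> nat) \<Rightarrow> complex)
     \<Rightarrow> ('n \<Rightarrow> nat \<Rightarrow> ('n \<Rightarrow> nat) \<Rightarrow> complex) \<Rightarrow> bool" where
  "hom_vf m mu q0 q \<longleftrightarrow> is_hpoly q0 \<and> (\<forall>j. is_hpoly (q j)) \<and>
     hom_hpoly m (mu + 1) q0 \<and> (\<forall>j. hom_hpoly m (mu + delta m j) (q j))"

definition rpoly_eval :: "(('n::finite \<Rightarrow> nat) \<Rightarrow> ('n \<Rightarrow> nat) \<Rightarrow> complex) \<Rightarrow> complex^'n \<Rightarrow> complex" where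
  "rpoly_eval c z = (\<Sum>(A, B)\<in>{(A, B). c A B \<noteq> 0}. c A B * monom A z * cnj (monom B z))"

definition rpoly_dz :: "(('n::finite \<Rightarrow> nat) \<Rightarrow> ('n \<Rightarrow> nat) \<Rightarrow> complex) \<Rightarrow> 'n \<Rightarrow> complex^'n \<Rightarrow> complex" where
  "rpoly_dz c j z = (\<Sum>(A, B)\<in>{(A, B). c A B \<noteq> 0}.
      c A B * of_nat (A j) * monom (A(j := A j - 1)) z * cnj (monom B z))"

definition std_p :: "('n::finite \<Rightarrow> nat) \<Rightarrow> (('n \<Rightarrow> nat) \<Rightarrow> ('n \<Rightarrow> nat) \<Rightarrow> complex) \<Rightarrow> bool" where
  "std_p m c \<longleftrightarrow> finite {(A, B). c A B \<noteq> 0}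
     \<and> (\<forall>z. Im (rpoly_eval c z) = 0)
     \<and> (\<forall>A B. c A B \<noteq> 0 \<longrightarrow> wt m A + wt m B = 1)
     \<and> (\<forall>A B. c A B \<noteq> 0 \<longrightarrow> A \<noteq> (\<lambda>_. 0) \<and> B \<noteq> (\<lambda>_. 0))"

definition Omega_hom :: "(('n::finite \<Rightarrow> nat) \<Rightarrow> ('n \<Rightarrow> nat) \<Rightarrow> complex) \<Rightarrow> (complex \<times> (complex^'n)) set" where
  "Omega_hom c = {(w, z). Im w + Re (rpoly_eval c z) < 0}"

definition in_A :: "('n::finite \<Rightarrow> nat) \<Rightarrow> (('n \<Rightarrow> nat) \<Rightarrow> ('n \<Rightarrow> nat) \<Rightarrow> complex) \<Rightarrow> real
     \<Rightarrow> (nat \<Rightarrow> ('n \<Rightarrow> nat) \<Rightarrow> complex) \<Rightarrow> ('n \<Rightarrow> nat \<Rightarrow> ('n \<Rightarrow> nat) \<Rightarrow> complex) \<Rightarrow> bool" where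
  "in_A m c mu q0 q \<longleftrightarrow> hom_vf m mu q0 q \<and>
     (\<forall>(w, z)\<in>frontier (Omega_hom c).
        Re (- (\<i> / 2) * hpoly_eval q0 w z + (\<Sum>j\<in>UNIV. hpoly_eval (q j) w z * rpoly_dz c j z)) = 0)"

end

theory Submission
  imports Defs
begin

text \<open>Weight considerations alone give q_0 = a w + f(z) with f of weight 1, and q_j
  independent of w, because every delta_j < 1. Moving Re w along the boundary shows that a
  is real. Under the weighted rotation z_j \<mapsto> exp(i N delta_j t) z_j, with N delta_j integral,
  f(z) picks up the factor exp(i N t), whereas every monomial of p involves both z and
  conj z, so p and the terms q_j dp/dz_j only carry frequencies of modulus less than N.
  The tangency condition is therefore a trigonometric identity in t whose top frequency N
  occurs only through f(z), so f vanishes.\<close>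

lemma sum_cis_roots_of_unity_eq_0:
  fixes d :: int and M :: nat
  assumes "M > 0" and "\<not> int M dvd d"
  shows "(\<Sum>k<M. cis (of_int d * (2 * pi * real k / real M))) = 0"
proof -
  define x where "x = cis (2 * pi * of_int d / real M)"
  have powers: "cis (of_int d * (2 * pi * real k / real M)) = x ^ k" for k
    unfolding x_def Complex.DeMoivre by (rule arg_cong[where f = cis]) (simp add: field_simps)
  have "x ^ M = cis (2 * pi * of_int d)"
    unfolding x_def Complex.DeMoivre using assms(1) by (simp add: field_simps)
  then have x_root: "x ^ M = 1"
    by simp
  have "x \<noteq> 1"
  proof
    assume "x = 1"
    then obtain n :: int where "2 * pi * of_int d / real M = of_int (2 * n) * pi"
      unfolding x_def cis_conv_exp by (auto simp: exp_eq_1)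
    then have "real_of_int d = real_of_int (n * int M)"
      using assms(1) by (simp add: field_simps)
    then show False
      using assms(2) by (simp only: of_int_eq_iff) simp
  qed
  then show ?thesis
    unfolding powers sum_gp_strict using x_root by simp
qed

definition band_limited :: "nat \<Rightarrow> (real \<Rightarrow> complex) \<Rightarrow> bool" where
  "band_limited N G \<longleftrightarrow>
     (\<exists>a. \<forall>t. G t = (\<Sum>e\<in>{- int N<..<int N}. a e * cis (of_int e * t)))"

lemma band_limited_zero: "band_limited N (\<lambda>_. 0)"
  unfolding band_limited_def by (intro exI[of _ "\<lambda>_. 0"]) simp

lemma band_limited_add:
  "band_limited N F \<Longrightarrow> band_limited N G \<Longrightarrow> band_limited N (\<lambda>t. F t + G t)"
  unfolding band_limited_def
  by (elim exE, rename_tac a b, rule_tac x = "\<lambda>e. a e + b e" in exI)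
     (simp add: distrib_right sum.distrib)

lemma band_limited_cmult: "band_limited N F \<Longrightarrow> band_limited N (\<lambda>t. b * F t)"
  unfolding band_limited_def
  by (elim exE, rename_tac a, rule_tac x = "\<lambda>e. b * a e" in exI)
     (simp add: sum_distrib_left mult.assoc)

lemma band_limited_sum:
  "(\<And>x. x \<in> S \<Longrightarrow> band_limited N (G x)) \<Longrightarrow> band_limited N (\<lambda>t. \<Sum>x\<in>S. G x t)"
  by (induction S rule: infinite_finite_induct) (simp_all add: band_limited_zero band_limited_add)

lemma band_limited_cis: "\<bar>e\<bar> < int N \<Longrightarrow> band_limited N (\<lambda>t. b * cis (of_int e * t))"
  unfolding band_limited_def
  by (rule exI[of _ "\<lambda>e'. if e' = e then b else 0"])
     (simp add: abs_less_iff if_distrib[of "\<lambda>x. x * _"] sum.delta' cong: if_cong)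

lemma band_limited_cnj: "band_limited N F \<Longrightarrow> band_limited N (\<lambda>t. cnj (F t))"
  unfolding band_limited_def
proof (elim exE)
  fix a assume F: "\<forall>t. F t = (\<Sum>e\<in>{- int N<..<int N}. a e * cis (of_int e * t))"
  have symmetric: "uminus ` {- int N<..<int N} = {- int N<..<int N}"
    by (auto simp: image_iff intro!: exI[of _ "- _"])
  have "cnj (F t) = (\<Sum>e\<in>{- int N<..<int N}. cnj (a (- e)) * cis (of_int e * t))" for t
  proof -
    have "cnj (F t) = (\<Sum>e\<in>{- int N<..<int N}. cnj (a e) * cis (of_int (- e) * t))"
      using F by (simp add: cis_cnj)
    also have "\<dots> = (\<Sum>e\<in>uminus ` {- int N<..<int N}. cnj (a (- e)) * cis (of_int e * t))"
      by (subst sum.reindex) (auto simp: inj_on_def)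
    finally show ?thesis
      unfolding symmetric .
  qed
  then show "\<exists>a. \<forall>t. cnj (F t) = (\<Sum>e\<in>{- int N<..<int N}. a e * cis (of_int e * t))"
    by (intro exI[of _ "\<lambda>e. cnj (a (- e))"]) blast
qed

lemma band_limited_discrete_coeff_eq_0:
  assumes "band_limited N G" and "0 < M" and "2 * N \<le> M"
  shows "(\<Sum>k<M. cis (- real N * (2 * pi * real k / real M)) * G (2 * pi * real k / real M)) = 0"
proof -
  define \<theta> where "\<theta> k = 2 * pi * real k / real M" for k
  obtain a where G: "\<And>t. G t = (\<Sum>e\<in>{- int N<..<int N}. a e * cis (of_int e * t))"
    using assms(1) unfolding band_limited_def by blast
  have "(\<Sum>k<M. cis (- real N * \<theta> k) * G (\<theta> k))
      = (\<Sum>e\<in>{- int N<..<int N}. a e * (\<Sum>k<M. cis (of_int (e - int N) * \<theta> k)))"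
    unfolding G sum_distrib_left
    by (subst sum.swap) (simp add: cis_mult algebra_simps)
  also have "\<dots> = 0"
  proof (intro sum.neutral ballI)
    fix e assume e: "e \<in> {- int N<..<int N}"
    have not_dvd: "\<not> int M dvd e - int N"
    proof
      assume "int M dvd e - int N"
      then have "int M \<le> \<bar>e - int N\<bar>"
        using e dvd_imp_le_int[of "e - int N" "int M"] by simp
      with e assms(3) show False
        by auto
    qed
    show "a e * (\<Sum>k<M. cis (of_int (e - int N) * \<theta> k)) = 0"
      by (simp only: \<theta>_def sum_cis_roots_of_unity_eq_0[OF assms(2) not_dvd] mult_zero_right)
  qed
  finally show ?thesis
    unfolding \<theta>_def .
qed

lemma band_limited_Re_top_coeff_eq_0:
  assumes L: "band_limited N L" and "0 < N"
    and Re_eq_0: "\<And>t. Re (b * cis (real N * t) + L t) = 0"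
  shows "b = 0"
proof -
  \<comment> \<open>Adding the conjugate and averaging against cis (- N t) over the 4N-th roots of unity
    isolates b: with 4N points, the frequencies of L' and the frequency - 2N coming from cnj b
    all average out.\<close>
  define M where "M = 4 * N"
  define \<theta> where "\<theta> k = 2 * pi * real k / real M" for k
  define L' where "L' t = L t + cnj (L t)" for t
  have "0 < M" "2 * N \<le> M"
    using \<open>0 < N\<close> by (simp_all add: M_def)
  have L': "band_limited N L'"
    unfolding L'_def by (intro band_limited_add band_limited_cnj L)
  have identity: "b * cis (real N * t) + cnj b * cis (- real N * t) + L' t = 0" for t
  proof -
    have "(b * cis (real N * t) + L t) + cnj (b * cis (real N * t) + L t) = 0"
      unfolding complex_add_cnj Re_eq_0 by simp
    then show ?thesis
      by (simp add: L'_def cis_cnj algebra_simps)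
  qed
  have not_dvd: "\<not> int M dvd - 2 * int N"
    using \<open>0 < N\<close> dvd_imp_le_int[of "- 2 * int N" "int M"] by (auto simp: M_def)
  have "0 = (\<Sum>k<M. cis (- real N * \<theta> k) *
               (b * cis (real N * \<theta> k) + cnj b * cis (- real N * \<theta> k) + L' (\<theta> k)))"
    by (simp only: identity mult_zero_right sum.neutral_const)
  also have "\<dots> = of_nat M * b + cnj b * (\<Sum>k<M. cis (of_int (- 2 * int N) * \<theta> k))
                   + (\<Sum>k<M. cis (- real N * \<theta> k) * L' (\<theta> k))"
    by (simp add: distrib_left sum.distrib sum_distrib_left cis_mult algebra_simps)
  also have "\<dots> = of_nat M * b"
    using band_limited_discrete_coeff_eq_0[OF L' \<open>0 < M\<close> \<open>2 * N \<le> M\<close>]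
      sum_cis_roots_of_unity_eq_0[OF \<open>0 < M\<close> not_dvd]
    by (simp add: \<theta>_def)
  finally show "b = 0"
    using \<open>0 < M\<close> by simp
qed

text \<open>Scaled by weight_denom m, the weights delta m i and wt m J become the integers
  int_delta m i and int_wt m J, so the weighted rotation is 2 pi-periodic in t and turns
  monomials into Fourier modes.\<close>

definition weight_denom :: "('n::finite \<Rightarrow> nat) \<Rightarrow> nat" where
  "weight_denom m = 2 * (\<Prod>i\<in>UNIV. m i)"

definition int_delta :: "('n::finite \<Rightarrow> nat) \<Rightarrow> 'n \<Rightarrow> int" where
  "int_delta m i = int (\<Prod>k\<in>UNIV - {i}. m k)"

definition int_wt :: "('n::finite \<Rightarrow> nat) \<Rightarrow> ('n \<Rightarrow> nat) \<Rightarrow> int" where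
  "int_wt m J = (\<Sum>i\<in>UNIV. int (J i) * int_delta m i)"

definition weighted_rotation :: "('n::finite \<Rightarrow> nat) \<Rightarrow> real \<Rightarrow> complex^'n \<Rightarrow> complex^'n" where
  "weighted_rotation m t z = (\<chi> i. cis (of_int (int_delta m i) * t) * z $ i)"

lemma weight_denom_pos: "\<forall>j. 0 < m j \<Longrightarrow> 0 < weight_denom m"
  unfolding weight_denom_def by simp

lemma of_int_int_delta:
  assumes "\<forall>j. 0 < m j"
  shows "real_of_int (int_delta m i) = real (weight_denom m) * delta m i"
proof -
  have "weight_denom m = 2 * m i * (\<Prod>k\<in>UNIV - {i}. m k)"
    unfolding weight_denom_def by (simp add: prod.remove[of UNIV i])
  then show ?thesis
    using assms unfolding int_delta_def delta_def by (simp del: of_nat_prod)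
qed

lemma of_int_int_wt:
  assumes "\<forall>j. 0 < m j"
  shows "real_of_int (int_wt m J) = real (weight_denom m) * wt m J"
  unfolding int_wt_def wt_def
  by (simp add: of_int_int_delta[OF assms] sum_distrib_left algebra_simps)

lemma wt_nonneg: "0 \<le> wt m J"
  unfolding wt_def delta_def by (simp add: sum_nonneg)

lemma wt_eq_0_iff:
  assumes "\<forall>j. 0 < m j"
  shows "wt m J = 0 \<longleftrightarrow> J = (\<lambda>_. 0)"
  using assms unfolding wt_def delta_def
  by (subst sum_nonneg_eq_0_iff) (auto simp: fun_eq_iff, metis neq0_conv)

lemma delta_less_1: "delta m j < 1"
  unfolding delta_def by (cases "m j") (simp_all add: field_simps)

lemma int_wt_fun_upd_dec:
  assumes "0 < A j"
  shows "int_wt m (A(j := A j - 1)) = int_wt m A - int_delta m j"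
proof -
  have "int ((A(j := A j - 1)) i) = int (A i) - (if i = j then 1 else 0)" for i
    using assms by auto
  then show ?thesis
    unfolding int_wt_def
    by (simp add: left_diff_distrib sum_subtractf if_distrib[of "\<lambda>x. x * _"] cong: if_cong)
qed

lemma monom_weighted_rotation:
  "monom J (weighted_rotation m t z) = cis (of_int (int_wt m J) * t) * monom J z"
proof -
  have "monom J (weighted_rotation m t z)
      = (\<Prod>i\<in>UNIV. cis (real (J i) * of_int (int_delta m i) * t) * (z $ i) ^ J i)"
    unfolding monom_def weighted_rotation_def
    by (simp add: power_mult_distrib Complex.DeMoivre mult.assoc)
  also have "\<dots> = cis (\<Sum>i\<in>UNIV. real (J i) * of_int (int_delta m i) * t) * monom J z"
    unfolding monom_def prod.distrib
    by (simp add: cis_conv_exp exp_sum sum_distrib_left)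
  also have "(\<Sum>i\<in>UNIV. real (J i) * of_int (int_delta m i) * t) = of_int (int_wt m J) * t"
    unfolding int_wt_def by (simp add: sum_distrib_right)
  finally show ?thesis .
qed

lemma hom_hpoly_delta_monomial:
  assumes m: "\<forall>j. 0 < m j" and hom: "hom_hpoly m (delta m j) a" and "a k J \<noteq> 0"
  shows "k = 0 \<and> int_wt m J = int_delta m j"
proof -
  have weight: "real k + wt m J = delta m j"
    using hom \<open>a k J \<noteq> 0\<close> unfolding hom_hpoly_def by blast
  then have "k = 0"
    using wt_nonneg[of m J] delta_less_1[of m j] by linarith
  moreover have "real_of_int (int_wt m J) = real_of_int (int_delta m j)"
    using weight \<open>k = 0\<close> by (simp add: of_int_int_wt[OF m] of_int_int_delta[OF m])
  ultimately show ?thesis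
    by (simp only: of_int_eq_iff simp_thms)
qed

lemma hom_hpoly_one_monomial:
  assumes m: "\<forall>j. 0 < m j" and hom: "hom_hpoly m 1 a" and "a k J \<noteq> 0"
  shows "(k = 0 \<and> int_wt m J = int (weight_denom m)) \<or> (k = 1 \<and> J = (\<lambda>_. 0))"
proof -
  have weight: "real k + wt m J = 1"
    using hom \<open>a k J \<noteq> 0\<close> unfolding hom_hpoly_def by blast
  then consider "k = 0" "wt m J = 1" | "k = 1" "wt m J = 0"
    using wt_nonneg[of m J] by (cases k) auto
  then show ?thesis
  proof cases
    case 1
    then have "real_of_int (int_wt m J) = real_of_int (int (weight_denom m))"
      by (simp add: of_int_int_wt[OF m])
    with \<open>k = 0\<close> show ?thesis
      by (simp only: of_int_eq_iff simp_thms)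
  next
    case 2
    then show ?thesis
      by (simp add: wt_eq_0_iff[OF m])
  qed
qed

lemma hpoly_eval_indep_w:
  assumes "\<And>k J. a k J \<noteq> 0 \<Longrightarrow> k = 0"
  shows "hpoly_eval a w z = hpoly_eval a 0 z"
  unfolding hpoly_eval_def by (rule sum.cong) (auto dest: assms)

lemma hpoly_eval_affine_in_w:
  assumes "is_hpoly a" and "\<And>k J. a k J \<noteq> 0 \<Longrightarrow> k = 0 \<or> (k = 1 \<and> J = (\<lambda>_. 0))"
  shows "hpoly_eval a w z = a 1 (\<lambda>_. 0) * w + hpoly_eval a 0 z"
proof -
  let ?S = "{(k, J). a k J \<noteq> 0}"
  have "hpoly_eval a w z - hpoly_eval a 0 z
      = (\<Sum>x\<in>?S. if x = (1, \<lambda>_. 0) then a 1 (\<lambda>_. 0) * w else 0)"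
    unfolding hpoly_eval_def sum_subtractf[symmetric]
    by (rule sum.cong) (auto simp: monom_def dest: assms(2))
  also have "\<dots> = a 1 (\<lambda>_. 0) * w"
    using assms(1) unfolding is_hpoly_def by (simp add: sum.delta)
  finally show ?thesis
    by (simp add: algebra_simps)
qed

lemma hpoly_eval_weighted_rotation:
  assumes "\<And>J. a 0 J \<noteq> 0 \<Longrightarrow> int_wt m J = d"
  shows "hpoly_eval a 0 (weighted_rotation m t z) = cis (of_int d * t) * hpoly_eval a 0 z"
  unfolding hpoly_eval_def sum_distrib_left
  by (rule sum.cong) (auto simp: monom_weighted_rotation power_0_left dest: assms)

lemma std_p_monomial_freq_bound:
  assumes m: "\<forall>j. 0 < m j" and "std_p m c" and "c A B \<noteq> 0"
  shows "\<bar>int_wt m A - int_wt m B\<bar> < int (weight_denom m)"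
proof -
  have "wt m A + wt m B = 1" "A \<noteq> (\<lambda>_. 0)" "B \<noteq> (\<lambda>_. 0)"
    using assms(2,3) unfolding std_p_def by auto
  then have "\<bar>wt m A - wt m B\<bar> < 1"
    using wt_nonneg[of m A] wt_nonneg[of m B] wt_eq_0_iff[OF m, of A] wt_eq_0_iff[OF m, of B]
    by linarith
  then have "real (weight_denom m) * \<bar>wt m A - wt m B\<bar> < real (weight_denom m)"
    using weight_denom_pos[OF m] by simp
  then have "real_of_int \<bar>int_wt m A - int_wt m B\<bar> < real_of_int (int (weight_denom m))"
    by (simp add: of_int_int_wt[OF m] abs_mult right_diff_distrib[symmetric])
  then show ?thesis
    by (simp only: of_int_less_iff)
qed

lemma band_limited_rotated_monomial:
  assumes "\<bar>d + int_wt m A - int_wt m B\<bar> < int N"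
  shows "band_limited N (\<lambda>t. cis (of_int d * t) *
           (C * monom A (weighted_rotation m t z) * cnj (monom B (weighted_rotation m t z))))"
proof -
  have "cis (of_int (d + int_wt m A - int_wt m B) * t)
      = cis (of_int d * t) * cis (of_int (int_wt m A) * t) * cnj (cis (of_int (int_wt m B) * t))"
    for t by (simp add: cis_cnj cis_mult algebra_simps)
  then have rotated: "cis (of_int d * t) *
          (C * monom A (weighted_rotation m t z) * cnj (monom B (weighted_rotation m t z)))
      = (C * monom A z * cnj (monom B z)) * cis (of_int (d + int_wt m A - int_wt m B) * t)" for t
    by (simp add: monom_weighted_rotation mult_ac)
  show ?thesis
    unfolding rotated by (rule band_limited_cis[OF assms])
qed

lemma band_limited_rpoly_rotation:
  assumes "\<forall>j. 0 < m j" and "std_p m c"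
  shows "band_limited (weight_denom m) (\<lambda>t. rpoly_eval c (weighted_rotation m t z))"
  unfolding rpoly_eval_def
proof (intro band_limited_sum, clarify)
  fix A B assume "c A B \<noteq> 0"
  then show "band_limited (weight_denom m) (\<lambda>t. c A B * monom A (weighted_rotation m t z)
               * cnj (monom B (weighted_rotation m t z)))"
    using band_limited_rotated_monomial[of 0, simplified]
      std_p_monomial_freq_bound[OF assms \<open>c A B \<noteq> 0\<close>] by blast
qed

lemma band_limited_rpoly_dz_rotation:
  assumes "\<forall>j. 0 < m j" and "std_p m c"
  shows "band_limited (weight_denom m)
           (\<lambda>t. cis (of_int (int_delta m j) * t) * rpoly_dz c j (weighted_rotation m t z))"
  unfolding rpoly_dz_def sum_distrib_left
proof (intro band_limited_sum, clarify)
  fix A B assume "c A B \<noteq> 0"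
  show "band_limited (weight_denom m) (\<lambda>t. cis (of_int (int_delta m j) * t) *
          (c A B * of_nat (A j) * monom (A(j := A j - 1)) (weighted_rotation m t z)
           * cnj (monom B (weighted_rotation m t z))))"
  proof (cases "A j = 0")
    case True
    then show ?thesis
      by (simp add: band_limited_zero)
  next
    case False
    then have "int_delta m j + int_wt m (A(j := A j - 1)) - int_wt m B = int_wt m A - int_wt m B"
      using int_wt_fun_upd_dec[of A j m] by simp
    then show ?thesis
      using std_p_monomial_freq_bound[OF assms \<open>c A B \<noteq> 0\<close>]
      by (intro band_limited_rotated_monomial) simp
  qed
qed

lemma frontier_Omega_homI:
  assumes "Im w + Re (rpoly_eval c z) = 0"
  shows "(w, z) \<in> frontier (Omega_hom c)"
proof -
  have "(w, z) \<notin> Omega_hom c"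
    using assms unfolding Omega_hom_def by simp
  moreover have "(w, z) \<in> closure (Omega_hom c)"
    unfolding closure_approachable
  proof (intro allI impI)
    fix e :: real assume "0 < e"
    have "(w - \<i> * of_real (e / 2), z) \<in> Omega_hom c"
      using assms \<open>0 < e\<close> unfolding Omega_hom_def by simp
    moreover have "dist (w - \<i> * of_real (e / 2), z) (w, z) < e"
      using \<open>0 < e\<close> by (simp add: dist_Pair_Pair dist_norm norm_mult)
    ultimately show "\<exists>y\<in>Omega_hom c. dist y (w, z) < e"
      by blast
  qed
  ultimately show ?thesis
    unfolding frontier_def using interior_subset by blast
qed

lemma in_A_boundary:
  assumes "in_A m c mu q0 q" and "(w, z) \<in> frontier (Omega_hom c)"
  shows "Re (- (\<i> / 2) * hpoly_eval q0 w z
             + (\<Sum>j\<in>UNIV. hpoly_eval (q j) w z * rpoly_dz c j z)) = 0"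
  using bspec[OF conjunct2[OF assms(1)[unfolded in_A_def]] assms(2)] by (simp only: case_prod_conv)

lemma in_A_zero_hom:
  assumes "in_A m c 0 q0 q"
  shows "is_hpoly q0" and "hom_hpoly m 1 q0" and "hom_hpoly m (delta m j) (q j)"
  using assms unfolding in_A_def hom_vf_def by simp_all

lemma in_A_zero_q_indep_w:
  assumes "\<forall>j. 0 < m j" and "in_A m c 0 q0 q"
  shows "hpoly_eval (q j) w z = hpoly_eval (q j) 0 z"
  using hom_hpoly_delta_monomial[OF assms(1) in_A_zero_hom(3)[OF assms(2)]]
  by (intro hpoly_eval_indep_w) blast

lemma in_A_zero_q0_affine:
  assumes "\<forall>j. 0 < m j" and "in_A m c 0 q0 q"
  shows "hpoly_eval q0 w z = q0 1 (\<lambda>_. 0) * w + hpoly_eval q0 0 z"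
  using hom_hpoly_one_monomial[OF assms(1) in_A_zero_hom(2)[OF assms(2)]]
  by (intro hpoly_eval_affine_in_w in_A_zero_hom(1)[OF assms(2)]) blast

lemma in_A_zero_boundary_identity:
  assumes m: "\<forall>j. 0 < m j" and A: "in_A m c 0 q0 q" and "Im w + Re (rpoly_eval c z) = 0"
  shows "Re (- (\<i> / 2) * (q0 1 (\<lambda>_. 0) * w + hpoly_eval q0 0 z)
             + (\<Sum>j\<in>UNIV. hpoly_eval (q j) 0 z * rpoly_dz c j z)) = 0"
  using in_A_boundary[OF A frontier_Omega_homI[OF assms(3)]]
  by (simp only: in_A_zero_q0_affine[OF m A, of w z] in_A_zero_q_indep_w[OF m A, of _ w z])

lemma in_A_zero_q0_coeff_real:
  assumes "\<forall>j. 0 < m j" and "in_A m c 0 q0 q"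
  shows "Im (q0 1 (\<lambda>_. 0)) = 0"
proof -
  define a where "a = q0 1 (\<lambda>_. 0)"
  define P where "P = Re (rpoly_eval c 0)"
  define T where "T = Re (- (\<i> / 2) * hpoly_eval q0 0 0
                          + (\<Sum>j\<in>UNIV. hpoly_eval (q j) 0 0 * rpoly_dz c j 0))"
  have "Re a * Im w / 2 + Im a * Re w / 2 + T = 0" if "Im w = - P" for w
    using in_A_zero_boundary_identity[OF assms, of w 0] that
    by (simp add: a_def P_def T_def algebra_simps)
  from this[of "Complex 1 (- P)"] this[of "Complex 0 (- P)"] show ?thesis
    by (simp add: a_def)
qed

lemma in_A_zero_q0_no_z_part:
  assumes m: "\<forall>j. 0 < m j" and std: "std_p m c" and A: "in_A m c 0 q0 q"
  shows "hpoly_eval q0 0 z = 0"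
proof -
  define N where "N = weight_denom m"
  define R where "R t = weighted_rotation m t z" for t
  define r where "r = Re (q0 1 (\<lambda>_. 0))"
  have a_real: "q0 1 (\<lambda>_. 0) = of_real r"
    using in_A_zero_q0_coeff_real[OF m A] unfolding r_def by (simp add: complex_eq_iff)
  have q0_rotated: "hpoly_eval q0 0 (R t) = cis (real N * t) * hpoly_eval q0 0 z" for t
    using hpoly_eval_weighted_rotation[of q0 m "int N"]
      hom_hpoly_one_monomial[OF m in_A_zero_hom(2)[OF A]]
    unfolding R_def N_def by fastforce
  have q_rotated:
    "hpoly_eval (q j) 0 (R t) = cis (of_int (int_delta m j) * t) * hpoly_eval (q j) 0 z" for j t
    using hpoly_eval_weighted_rotation hom_hpoly_delta_monomial[OF m in_A_zero_hom(3)[OF A]]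
    unfolding R_def by blast
  define L where "L t = - of_real (r / 2) * rpoly_eval c (R t)
      + (\<Sum>j\<in>UNIV. hpoly_eval (q j) 0 z * (cis (of_int (int_delta m j) * t) * rpoly_dz c j (R t)))"
    for t
  have "band_limited N L"
    unfolding L_def R_def N_def
    by (intro band_limited_add band_limited_cmult band_limited_sum
        band_limited_rpoly_rotation[OF m std] band_limited_rpoly_dz_rotation[OF m std])
  moreover have "Re (- (\<i> / 2) * hpoly_eval q0 0 z * cis (real N * t) + L t) = 0" for t
  proof -
    define w where "w = - \<i> * rpoly_eval c (R t)"
    have "Im w + Re (rpoly_eval c (R t)) = 0"
      unfolding w_def by simp
    from in_A_zero_boundary_identity[OF m A this] show ?thesis
      unfolding a_real q0_rotated q_rotated L_def w_def
      by (simp add: algebra_simps sum_distrib_left)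
  qed
  ultimately have "- (\<i> / 2) * hpoly_eval q0 0 z = 0"
    using weight_denom_pos[OF m] unfolding N_def by (intro band_limited_Re_top_coeff_eq_0)
  then show ?thesis
    by simp
qed

theorem lemma3p1:
  fixes m :: "'n::finite \<Rightarrow> nat"
    and c :: "('n \<Rightarrow> nat) \<Rightarrow> ('n \<Rightarrow> nat) \<Rightarrow> complex"
    and q0 :: "nat \<Rightarrow> ('n \<Rightarrow> nat) \<Rightarrow> complex"
    and q :: "'n \<Rightarrow> nat \<Rightarrow> ('n \<Rightarrow> nat) \<Rightarrow> complex"
  assumes "\<forall>j. m j > 0"
    and "std_p m c"
    and "in_A m c 0 q0 q"
  shows "\<exists>r::real. \<exists>l :: 'n \<Rightarrow> complex^'n \<Rightarrow> complex. \<forall>w z.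
           hpoly_eval q0 w z = of_real r * w \<and>
           (\<forall>j. hpoly_eval (q j) w z = of_real r * of_real (delta m j) * z $ j + l j z)"
proof -
  define r where "r = Re (q0 1 (\<lambda>_. 0))"
  have "hpoly_eval q0 w z = of_real r * w" for w z
    using in_A_zero_q0_affine[OF assms(1,3)] in_A_zero_q0_no_z_part[OF assms]
      in_A_zero_q0_coeff_real[OF assms(1,3)]
    by (simp add: r_def complex_eq_iff)
  moreover have "hpoly_eval (q j) w z = hpoly_eval (q j) 0 z" for j w z
    using in_A_zero_q_indep_w[OF assms(1,3)] .
  ultimately show ?thesis
    by (intro exI[of _ r]
        exI[of _ "\<lambda>j z. hpoly_eval (q j) 0 z - of_real r * of_real (delta m j) * z $ j"])
      simp
qed

end
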